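(* Let $n\geq 3$, $k\in\mathbb{Z}_n$ with $k\neq 0$ and $2k\not\equiv 0\pmod n$, and let $C$ be a total perfect code in $\mathrm{GP}(n,k)$ such that $u_\ell,u_{\ell+1}\in C$ for some $\ell\in\mathbb{Z}_n$. Then $u_{\ell+6},u_{\ell+7}\in C$; consequently $n\equiv 0\pmod 6$ and $C\cap U=\{u_{\ell+6i},u_{\ell+6i+1}\mid i\in\mathbb{Z}_n\}$.
   Context: For an integer $n\geq 3$ and a nonzero $k\in\mathbb{Z}_n$, the generalized Petersen graph $\mathrm{GP}(n,k)$ is the simple graph with vertex set $\{u_i,v_i\mid i\in\mathbb{Z}_n\}$ and edges $u_iu_{i+1}$, $u_iv_i$, $v_iv_{i+k}$ for all $i\in\mathbb{Z}_n$ (indices modulo $n$). Let $U=\{u_i\mid i\in\mathbb{Z}_n\}$. A total perfect code in a graph $\Gamma$ is a set $C\subseteq V(\Gamma)$ such that every vertex of $\Gamma$ is adjacent to exactly one vertex of $C$. *)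

theory Defs
  imports Main
begin

(* Vertices of GP(n,k): u_i = Outer i, v_i = Inner i, with i in {0..<n} representing Z_n. *)
datatype gpvert = Outer nat | Inner nat

definition gp_verts :: "nat \<Rightarrow> gpvert set" where
  "gp_verts n = Outer ` {0..<n} \<union> Inner ` {0..<n}"

definition gp_adj :: "nat \<Rightarrow> nat \<Rightarrow> gpvert \<Rightarrow> gpvert \<Rightarrow> bool" where
  "gp_adj n k x y \<longleftrightarrow> x \<in> gp_verts n \<and> y \<in> gp_verts n \<and> x \<noteq> y \<and>
     (\<exists>i<n. (x = Outer i \<and> y = Outer ((i + 1) mod n)) \<or> (y = Outer i \<and> x = Outer ((i + 1) mod n))
          \<or> (x = Outer i \<and> y = Inner i) \<or> (y = Outer i \<and> x = Inner i)
          \<or> (x = Inner i \<and> y = Inner ((i + k) mod n)) \<or> (y = Inner i \<and> x = Inner ((i + k) mod n)))"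

definition total_perfect_code :: "nat \<Rightarrow> nat \<Rightarrow> gpvert set \<Rightarrow> bool" where
  "total_perfect_code n k C \<longleftrightarrow> C \<subseteq> gp_verts n \<and>
     (\<forall>x\<in>gp_verts n. \<exists>!c. c \<in> C \<and> gp_adj n k x c)"

end

(*
  Write x i for u_(i mod n) \<in> C and y i for v_(i mod n) \<in> C, with i ranging over the integers.
  The code condition at u_i and at v_i says that exactly one of x (i - 1), x (i + 1), y i holds and
  exactly one of x i, y (i + k), y (i - k) holds; the latter are three distinct vertices because
  2k is not 0 mod n. Restricted to the indices j + a k with 0 \<le> j \<le> 6 and |a| \<le> 3, these
  constraints are a finite propositional problem in which x 0 and x 1 force x 2, ..., x 5 to fail
  and x 6, x 7 to hold. Iterating, x (l + d) holds exactly when d mod 6 \<le> 1, and comparing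
  d = n, n + 1 with d = 0, 1 (the same vertices) gives 6 | n.
*)
theory Submission
  imports Defs
begin

lemma of_nat_mod_add_diff:
  fixes a n k :: nat
  assumes "k \<le> n"
  shows "int ((a + n - k) mod n) = (int a - int k) mod int n"
proof -
  have "int ((a + n - k) mod n) = (int a - int k + int n) mod int n"
    using assms by (simp add: zmod_int of_nat_diff algebra_simps)
  then show ?thesis
    by simp
qed

lemma eq_mod_add_iff:
  fixes n i j k :: nat
  assumes "i < n" "j < n" "k \<le> n"
  shows "i = (j + k) mod n \<longleftrightarrow> j = (i + n - k) mod n"
proof -
  have "int ((j + k) mod n) = (int j + int k) mod int n"
    by (simp add: zmod_int)
  moreover have "int ((i + n - k) mod n) = (int i - int k) mod int n"
    using of_nat_mod_add_diff[OF assms(3)] .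
  moreover have "int i = (int j + int k) mod int n \<longleftrightarrow> int j = (int i - int k) mod int n"
  proof
    assume "int i = (int j + int k) mod int n"
    then have "(int i - int k) mod int n = int j mod int n"
      by (simp add: mod_diff_left_eq)
    then show "int j = (int i - int k) mod int n"
      using assms(2) by simp
  next
    assume "int j = (int i - int k) mod int n"
    then have "(int j + int k) mod int n = int i mod int n"
      by (simp add: mod_add_left_eq)
    then show "int i = (int j + int k) mod int n"
      using assms(1) by simp
  qed
  ultimately show ?thesis
    by (metis of_nat_eq_iff)
qed

lemma mod_add_ne_mod_diff:
  fixes m n d :: nat
  assumes "d \<le> n" and "\<not> n dvd 2 * d"
  shows "(m + d) mod n \<noteq> (m + n - d) mod n"
proof
  assume "(m + d) mod n = (m + n - d) mod n"
  then have "int ((m + d) mod n) = int ((m + n - d) mod n)"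
    by simp
  then have "(int m + int d) mod int n = (int m - int d) mod int n"
    unfolding of_nat_mod_add_diff[OF assms(1)] by (simp add: zmod_int)
  then have "int n dvd int (2 * d)"
    by (simp add: mod_eq_dvd_iff)
  with assms(2) show False
    by (simp only: of_nat_dvd_iff)
qed

lemma gp_adj_Outer_iff:
  assumes "n \<ge> 3" "i < n"
  shows "gp_adj n k (Outer i) c \<longleftrightarrow>
    c = Outer ((i + 1) mod n) \<or> c = Outer ((i + n - 1) mod n) \<or> c = Inner i"
proof (cases c)
  case (Outer j)
  show ?thesis
  proof (cases "j < n")
    case True
    have "i \<noteq> (i + 1) mod n" "i \<noteq> (i + n - 1) mod n"
      using assms by (auto simp: mod_if)
    moreover have "i = (j + 1) mod n \<longleftrightarrow> j = (i + n - 1) mod n"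
      using eq_mod_add_iff[of i n j 1] assms True by simp
    ultimately show ?thesis
      using Outer True assms unfolding gp_adj_def gp_verts_def by auto
  next
    case False
    then show ?thesis
      using Outer assms unfolding gp_adj_def gp_verts_def by auto
  qed
next
  case (Inner j)
  then show ?thesis
    using assms unfolding gp_adj_def gp_verts_def by auto
qed

lemma gp_adj_Inner_iff:
  assumes "0 < k" "k < n" "i < n"
  shows "gp_adj n k (Inner i) c \<longleftrightarrow>
    c = Outer i \<or> c = Inner ((i + k) mod n) \<or> c = Inner ((i + n - k) mod n)"
proof (cases c)
  case (Inner j)
  show ?thesis
  proof (cases "j < n")
    case True
    have "i \<noteq> (i + k) mod n" "i \<noteq> (i + n - k) mod n"
      using assms by (auto simp: mod_if)
    moreover have "i = (j + k) mod n \<longleftrightarrow> j = (i + n - k) mod n"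
      using eq_mod_add_iff[of i n j k] assms True by simp
    ultimately show ?thesis
      using Inner True assms unfolding gp_adj_def gp_verts_def by auto
  next
    case False
    then show ?thesis
      using Inner assms unfolding gp_adj_def gp_verts_def by auto
  qed
next
  case (Outer j)
  then show ?thesis
    using assms unfolding gp_adj_def gp_verts_def by auto
qed

definition exactly_one :: "bool \<Rightarrow> bool \<Rightarrow> bool \<Rightarrow> bool" where
  "exactly_one p q r \<longleftrightarrow> (p \<or> q \<or> r) \<and> \<not> (p \<and> q) \<and> \<not> (p \<and> r) \<and> \<not> (q \<and> r)"

definition gp_code_constraints :: "int \<Rightarrow> (int \<Rightarrow> bool) \<Rightarrow> (int \<Rightarrow> bool) \<Rightarrow> bool" where
  "gp_code_constraints k x y \<longleftrightarrow>
     (\<forall>i. exactly_one (x (i - 1)) (x (i + 1)) (y i)) \<and>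
     (\<forall>i. exactly_one (x i) (y (i + k)) (y (i - k)))"

lemma total_perfect_code_exactly_one:
  assumes "total_perfect_code n k C" "v \<in> gp_verts n"
    and "\<And>c. gp_adj n k v c \<longleftrightarrow> c = a \<or> c = b \<or> c = d"
    and "a \<noteq> b" "a \<noteq> d" "b \<noteq> d"
  shows "exactly_one (a \<in> C) (b \<in> C) (d \<in> C)"
proof -
  have "\<exists>!c. c \<in> C \<and> gp_adj n k v c"
    using assms(1,2) unfolding total_perfect_code_def by blast
  then have "\<exists>!c. c \<in> C \<and> (c = a \<or> c = b \<or> c = d)"
    using assms(3) by simp
  then show ?thesis
    using assms(4-6) unfolding exactly_one_def by blast
qed

lemma nat_mod_add:
  assumes "0 < n" "0 \<le> d"
  shows "nat ((i + d) mod int n) = (nat (i mod int n) + nat d) mod n"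
proof -
  have "int ((nat (i mod int n) + nat d) mod n) = (i mod int n + d) mod int n"
    using assms by (simp add: zmod_int)
  also have "\<dots> = (i + d) mod int n"
    by (simp add: mod_add_left_eq)
  finally show ?thesis
    by (metis nat_int)
qed

lemma nat_mod_diff:
  assumes "0 < n" "0 \<le> d" "d \<le> int n"
  shows "nat ((i - d) mod int n) = (nat (i mod int n) + n - nat d) mod n"
proof -
  have "int ((nat (i mod int n) + n - nat d) mod n) = (i mod int n - d) mod int n"
    using of_nat_mod_add_diff[of "nat d" n "nat (i mod int n)"] assms by simp
  also have "\<dots> = (i - d) mod int n"
    by (simp add: mod_diff_left_eq)
  finally show ?thesis
    by (metis nat_int)
qed

lemma total_perfect_code_constraints:
  assumes "n \<ge> 3" "0 < k" "k < n" "(2 * k) mod n \<noteq> 0" "total_perfect_code n k C"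
  shows "gp_code_constraints (int k)
    (\<lambda>i. Outer (nat (i mod int n)) \<in> C) (\<lambda>i. Inner (nat (i mod int n)) \<in> C)"
  unfolding gp_code_constraints_def
proof (intro conjI allI)
  fix i :: int
  define m where "m = nat (i mod int n)"
  have "m < n"
    using assms(1) unfolding m_def by (simp add: nat_less_iff)
  have outer_nbrs: "nat ((i + 1) mod int n) = (m + 1) mod n" "nat ((i - 1) mod int n) = (m + n - 1) mod n"
    using nat_mod_add[of n 1 i] nat_mod_diff[of n 1 i] assms(1) unfolding m_def by simp_all
  have inner_nbrs: "nat ((i + int k) mod int n) = (m + k) mod n" "nat ((i - int k) mod int n) = (m + n - k) mod n"
    using nat_mod_add[of n "int k" i] nat_mod_diff[of n "int k" i] assms(1,3) unfolding m_def by simp_all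
  have "(m + 1) mod n \<noteq> (m + n - 1) mod n"
    using mod_add_ne_mod_diff[of 1 n m] assms(1) by (simp add: nat_dvd_not_less)
  then have "exactly_one (Outer ((m + n - 1) mod n) \<in> C) (Outer ((m + 1) mod n) \<in> C) (Inner m \<in> C)"
    by (intro total_perfect_code_exactly_one[OF assms(5), of "Outer m"])
      (use \<open>m < n\<close> assms(1) in \<open>auto simp: gp_verts_def gp_adj_Outer_iff\<close>)
  then show "exactly_one (Outer (nat ((i - 1) mod int n)) \<in> C) (Outer (nat ((i + 1) mod int n)) \<in> C)
      (Inner (nat (i mod int n)) \<in> C)"
    unfolding outer_nbrs m_def[symmetric] .
  have "(m + k) mod n \<noteq> (m + n - k) mod n"
    using mod_add_ne_mod_diff[of k n m] assms(3,4) by (simp add: dvd_eq_mod_eq_0)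
  then have "exactly_one (Outer m \<in> C) (Inner ((m + k) mod n) \<in> C) (Inner ((m + n - k) mod n) \<in> C)"
    by (intro total_perfect_code_exactly_one[OF assms(5), of "Inner m"])
      (use \<open>m < n\<close> assms(2,3) in \<open>auto simp: gp_verts_def gp_adj_Inner_iff\<close>)
  then show "exactly_one (Outer (nat (i mod int n)) \<in> C) (Inner (nat ((i + int k) mod int n)) \<in> C)
      (Inner (nat ((i - int k) mod int n)) \<in> C)"
    unfolding inner_nbrs m_def[symmetric] .
qed

lemma gp_code_constraints_step:
  assumes "gp_code_constraints k x y" and "x L" and "x (L + 1)"
  shows "\<not> x (L + 2) \<and> \<not> x (L + 3) \<and> \<not> x (L + 4) \<and> \<not> x (L + 5) \<and> x (L + 6) \<and> x (L + 7)"
proof -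
  (* coordinates on the lattice L + j + a k: outer edges change j, inner edges change a *)
  define X where "X j a = x (L + j + a * k)" for j a :: int
  define Y where "Y j a = y (L + j + a * k)" for j a :: int
  have outer: "exactly_one (X (j - 1) a) (X (j + 1) a) (Y j a)" for j a
  proof -
    have "exactly_one (x ((L + j + a * k) - 1)) (x ((L + j + a * k) + 1)) (y (L + j + a * k))"
      using assms(1) unfolding gp_code_constraints_def by blast
    then show ?thesis
      unfolding X_def Y_def by (simp add: algebra_simps)
  qed
  have inner: "exactly_one (X j a) (Y j (a + 1)) (Y j (a - 1))" for j a
  proof -
    have "exactly_one (x (L + j + a * k)) (y ((L + j + a * k) + k)) (y ((L + j + a * k) - k))"
      using assms(1) unfolding gp_code_constraints_def by blast
    then show ?thesis
      unfolding X_def Y_def by (simp add: algebra_simps)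
  qed
  have "\<forall>j\<in>set [0..6]. \<forall>a\<in>set [-3..3]. exactly_one (X (j - 1) a) (X (j + 1) a) (Y j a)"
    "\<forall>j\<in>set [0..6]. \<forall>a\<in>set [-2..2]. exactly_one (X j a) (Y j (a + 1)) (Y j (a - 1))"
    using outer inner by blast+
  moreover have "X 0 0" "X 1 0"
    using assms(2,3) by (simp_all add: X_def)
  ultimately have "\<not> X 2 0 \<and> \<not> X 3 0 \<and> \<not> X 4 0 \<and> \<not> X 5 0 \<and> X 6 0 \<and> X 7 0"
    by (simp add: upto.simps) (unfold exactly_one_def, sat)
  then show ?thesis
    by (simp add: X_def add.commute)
qed

lemma gp_code_constraints_periodic:
  assumes "gp_code_constraints k x y" and "x L" and "x (L + 1)"
  shows "x (L + int d) \<longleftrightarrow> d mod 6 \<le> 1"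
proof -
  have block: "x (L + 6 * int q) \<and> x (L + 6 * int q + 1)" for q
  proof (induction q)
    case 0
    then show ?case
      using assms(2,3) by simp
  next
    case (Suc q)
    then have "x (L + 6 * int q + 6) \<and> x (L + 6 * int q + 7)"
      using gp_code_constraints_step[OF assms(1), of "L + 6 * int q"] by blast
    then show ?case
      by (simp add: algebra_simps)
  qed
  define q r where "q = d div 6" and "r = d mod 6"
  have "d = 6 * q + r"
    unfolding q_def r_def by simp
  then have "int d = 6 * int q + int r"
    by simp
  moreover have "r = 0 \<or> r = 1 \<or> r = 2 \<or> r = 3 \<or> r = 4 \<or> r = 5"
    unfolding r_def by auto
  ultimately show ?thesis
    using block[of q] gp_code_constraints_step[OF assms(1), of "L + 6 * int q"]
    unfolding r_def[symmetric] by (auto simp: add.assoc)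
qed

lemma outer_code_set_eq:
  assumes "l < n" and "\<And>d. Outer ((l + d) mod n) \<in> C \<longleftrightarrow> d mod 6 \<le> 1"
  shows "C \<inter> Outer ` {0..<n} =
    {Outer ((l + 6 * i) mod n) | i. i < n} \<union> {Outer ((l + 6 * i + 1) mod n) | i. i < n}"
    (is "_ = ?S")
proof
  show "C \<inter> Outer ` {0..<n} \<subseteq> ?S"
  proof
    fix v
    assume "v \<in> C \<inter> Outer ` {0..<n}"
    then obtain j where "j < n" "v = Outer j" "v \<in> C"
      by auto
    define d where "d = j + n - l"
    have "(l + d) mod n = j"
      using assms(1) \<open>j < n\<close> unfolding d_def by simp
    then have "d mod 6 \<le> 1"
      using assms(2)[of d] \<open>v = Outer j\<close> \<open>v \<in> C\<close> by simp
    then consider "l + d = l + 6 * (d div 6)" | "l + d = l + 6 * (d div 6) + 1"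
      using mult_div_mod_eq[of 6 d] by arith
    moreover have "d div 6 < n"
      using assms(1) \<open>j < n\<close> unfolding d_def by simp
    ultimately show "v \<in> ?S"
      using \<open>v = Outer j\<close> \<open>(l + d) mod n = j\<close> by (cases; metis (mono_tags, lifting) UnCI mem_Collect_eq)
  qed
next
  have "Outer ((l + 6 * i) mod n) \<in> C" "Outer ((l + 6 * i + 1) mod n) \<in> C" for i
    using assms(2)[of "6 * i"] assms(2)[of "6 * i + 1"] by (simp_all add: add.assoc)
  moreover have "a mod n < n" for a
    using assms(1) by simp
  ultimately show "?S \<subseteq> C \<inter> Outer ` {0..<n}"
    by auto
qed

theorem mainTheorem9:
  fixes n k l :: nat and C :: "gpvert set"
  assumes "n \<ge> 3" and "0 < k" and "k < n" and "(2 * k) mod n \<noteq> 0"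
    and "total_perfect_code n k C"
    and "l < n" and "Outer l \<in> C" and "Outer ((l + 1) mod n) \<in> C"
  shows "Outer ((l + 6) mod n) \<in> C \<and> Outer ((l + 7) mod n) \<in> C \<and> n mod 6 = 0 \<and>
    C \<inter> Outer ` {0..<n} = {Outer ((l + 6 * i) mod n) | i. i < n} \<union> {Outer ((l + 6 * i + 1) mod n) | i. i < n}"
proof -
  let ?x = "\<lambda>i. Outer (nat (i mod int n)) \<in> C"
  have x_of_nat: "?x (int a) \<longleftrightarrow> Outer (a mod n) \<in> C" for a
    by (simp flip: zmod_int)
  have constraints: "gp_code_constraints (int k) ?x (\<lambda>i. Inner (nat (i mod int n)) \<in> C)"
    using total_perfect_code_constraints[OF assms(1-5)] .
  have "?x (int l)" "?x (int l + 1)"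
    using assms(6-8) x_of_nat[of l] x_of_nat[of "l + 1"] by (simp_all add: add.commute)
  from gp_code_constraints_periodic[OF constraints this]
  have period: "Outer ((l + d) mod n) \<in> C \<longleftrightarrow> d mod 6 \<le> 1" for d
    using x_of_nat[of "l + d"] by simp
  have "(l + n) mod n = l" "(l + (n + 1)) mod n = (l + 1) mod n"
    using assms(6) by (simp, metis add.commute add.left_commute mod_add_self1)
  then have "n mod 6 \<le> 1" "(n + 1) mod 6 \<le> 1"
    using period[of n] period[of "n + 1"] assms(7,8) by simp_all
  then have "n mod 6 = 0"
    by presburger
  then show ?thesis
    using period[of 6] period[of 7] outer_code_set_eq[OF assms(6) period] by simp
qed

end
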